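(* For every $n\ge 0$, $\tilde h_n(q)=\bar c_{n+1}(q)$, where $\tilde h_n(q)=q^{n(n-1)/2}h_n(q^{-1})$ and $\bar c_n(q)$ are the Han–Zeng $q$-normalized median Genocchi numbers.
   Context: Han–Zeng polynomials: define $C_1(x,q)=1$ and for $n\ge2$ $$C_n(x,q)=(1+qx)\,\frac{(1+qx)\,C_{n-1}(1+qx,q)-x\,C_{n-1}(x,q)}{1+qx-x},$$ and set $\bar c_n(q)=C_n(1,q)/(1+q)^{n-1}$ for $n\ge1$ (these are polynomials in $q$). Gaussian binomial coefficients: $\binom{m}{k}_q=\frac{[m]_q!}{[k]_q![m-k]_q!}$, $[m]_q!=\prod_{i=1}^m\frac{1-q^i}{1-q}$, zero unless $0\le k\le m$. Let $W$ be $\mathbb C^n$ with basis $w_1,\dots,w_n$, $pr_k:W\to W$ the projection killing the $w_k$-coordinate. The degenerate flag variety $\mathrm{Fl}^a_n$ consists of tuples $(V_1,\dots,V_{n-1})$ of subspaces with $\dim V_k=k$ and $pr_{k+1}V_k\subset V_{k+1}$ ($k=1,\dots,n-2$); it has a decomposition into complex affine cells and $h_n(q)$ denotes its Poincaré polynomial with $q=t^2$ (degree $n(n-1)/2$, $h_0=h_1=1$). It is known that $h_n(q)=\sum_{f_1,\dots,f_{n-1}\ge 0} q^{\sum_{k=1}^{n-1}(k-f_k)(1-f_k+f_{k+1})}\prod_{k=1}^{n-1}\binom{1+f_{k-1}}{f_k}_{q}\binom{1+f_{k+1}}{f_k}_{q}$ with $f_0=f_n=0$. *)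

theory Defs
  imports "HOL-Computational_Algebra.Polynomial"
begin

text \<open>Han-Zeng polynomials C_n(x,q), as polynomials in x whose coefficients are
  integer polynomials in q (outer variable x, inner variable q).
  The division in the recursion is exact division of polynomials.\<close>

fun HZ_C :: "nat \<Rightarrow> int poly poly" where
  "HZ_C 0 = 1"
| "HZ_C (Suc 0) = 1"
| "HZ_C (Suc (Suc m)) =
     (let X = [:0, 1:] :: int poly poly;
          Q = [:[:0, 1:]:] :: int poly poly;
          Y = 1 + Q * X
      in Y * ((Y * pcompose (HZ_C (Suc m)) Y - X * HZ_C (Suc m)) div (Y - X)))"

definition HZ_cbar :: "nat \<Rightarrow> int poly" where
  "HZ_cbar n = poly (HZ_C n) 1 div [:1, 1:] ^ (n - 1)"

definition qint :: "nat \<Rightarrow> int poly" where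
  "qint i = (\<Sum>j<i. monom 1 j)"

definition qfact :: "nat \<Rightarrow> int poly" where
  "qfact m = (\<Prod>i=1..m. qint i)"

definition qbinom :: "nat \<Rightarrow> nat \<Rightarrow> int poly" where
  "qbinom m k = (if k \<le> m then qfact m div (qfact k * qfact (m - k)) else 0)"

text \<open>Summation data for h_n: f_1,...,f_{n-1} encoded as f :: nat => nat with
  f k = 0 outside {1..n-1} (so f_0 = f_n = 0).\<close>
definition hz_binprod :: "nat \<Rightarrow> (nat \<Rightarrow> nat) \<Rightarrow> int poly" where
  "hz_binprod n f = (\<Prod>k=1..n-1. qbinom (1 + f (k - 1)) (f k) * qbinom (1 + f (k + 1)) (f k))"

definition hz_exp :: "nat \<Rightarrow> (nat \<Rightarrow> nat) \<Rightarrow> int" where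
  "hz_exp n f = (\<Sum>k=1..n-1. (int k - int (f k)) * (1 - int (f k) + int (f (k + 1))))"

text \<open>Index set: all admissible f whose summand is nonzero (the sum in the paper
  runs over all f_1,...,f_{n-1} >= 0; terms with a vanishing product contribute 0).\<close>
definition hz_index :: "nat \<Rightarrow> (nat \<Rightarrow> nat) set" where
  "hz_index n = {f. (\<forall>k. k \<notin> {1..n-1} \<longrightarrow> f k = 0) \<and> hz_binprod n f \<noteq> 0}"

text \<open>Poincare polynomial h_n of the degenerate flag variety, via the known formula,
  evaluated at a nonzero real q.\<close>
definition h_poincare :: "nat \<Rightarrow> real \<Rightarrow> real" where
  "h_poincare n q = (\<Sum>f\<in>hz_index n. q powi hz_exp n f * poly (map_poly of_int (hz_binprod n f)) q)"

definition h_tilde :: "nat \<Rightarrow> real \<Rightarrow> real" where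
  "h_tilde n q = q ^ (n * (n - 1) div 2) * h_poincare n (inverse q)"

end

theory Submission
  imports Defs
begin

text \<open>
  Proof idea.  Both sides are evaluated through one and the same three-term
  recurrence in a nonnegative integer "level" a.

  Han--Zeng side: expand C_(n+1)(x,q) in the Newton basis
  psi_a(x) = (x - [1]_q) \<dots> (x - [a]_q).  The operator P \<mapsto> Y P(Y) - x P(x),
  Y = 1 + qx, divided by Y - x and multiplied by Y, sends psi_a to an explicit
  combination of psi_(a+1), psi_a, psi_(a-1).  Hence the coefficients satisfy a
  three-term recurrence, and C_(n+1)(1,q) is the coefficient of psi_0 (all
  other psi_a vanish at x = 1).  A diagonal rescaling of the coefficients
  removes the factor (1+q)^n, which identifies cbar_(n+1) with the level-0
  entry of a normalised recurrence.

  Poincare side: the sum defining h_n is a sum over lattice paths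
  0 = f_0, f_1, \<dots>, f_n = 0 with steps in {-1,0,1} (all other summands vanish),
  so it satisfies a transfer-matrix recursion in the length of the path.
  After the substitution q \<mapsto> 1/q and the right power of q, the reversed
  partial sums satisfy exactly the normalised recurrence, which proves the
  corollary.
\<close>

section \<open>The Han--Zeng recursion in a Newton basis\<close>

definition hzX :: "int poly poly" where "hzX = [:0, 1:]"
definition hzQ :: "int poly poly" where "hzQ = [:[:0, 1:]:]"
definition hzY :: "int poly poly" where "hzY = 1 + hzQ * hzX"

definition hz_op :: "int poly poly \<Rightarrow> int poly poly" where
  "hz_op P = hzY * pcompose P hzY - hzX * P"

lemma hzX_pcompose [simp]: "pcompose hzX p = p"
  by (simp add: hzX_def pcompose_pCons)

lemma hz_op_linear: "hz_op (\<Sum>a\<in>A. smult (c a) (P a)) = (\<Sum>a\<in>A. smult (c a) (hz_op (P a)))"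
  by (simp only: hz_op_def pcompose_sum pcompose_smult sum_distrib_left mult_smult_right
      smult_diff_right sum_subtractf)

lemma HZ_C_Suc_Suc: "HZ_C (Suc (Suc m)) = hzY * (hz_op (HZ_C (Suc m)) div (hzY - hzX))"
  by (simp add: hz_op_def hzX_def hzQ_def hzY_def Let_def)

text \<open>Y - x divides R(Y) - R(x) for every polynomial R; with R = x P this makes the
  division in the recursion exact.\<close>

lemma pcompose_minus_dvd:
  fixes R Y :: "'a::comm_ring_1 poly"
  shows "(Y - [:0, 1:]) dvd (pcompose R Y - R)"
proof (induction R)
  case 0
  then show ?case by simp
next
  case (pCons c R)
  then obtain k where k: "pcompose R Y - R = (Y - [:0, 1:]) * k" by blast
  have "pcompose (pCons c R) Y - pCons c R = Y * (pcompose R Y - R) + (Y - [:0, 1:]) * R"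
    by (simp add: pcompose_pCons algebra_simps)
  also have "\<dots> = (Y - [:0, 1:]) * (Y * k + R)"
    by (simp add: k algebra_simps)
  finally show ?case by (rule dvdI)
qed

lemma hz_op_dvd: "(hzY - hzX) dvd hz_op P"
proof -
  have "hz_op P = pcompose (hzX * P) hzY - hzX * P"
    by (simp add: hz_op_def pcompose_mult)
  then show ?thesis
    using pcompose_minus_dvd[of hzY "hzX * P"] by (simp add: hzX_def)
qed

lemma hzY_minus_hzX_nonzero: "hzY - hzX \<noteq> 0"
proof
  assume "hzY - hzX = 0"
  then have "poly (hzY - hzX) 0 = 0" by simp
  then show False by (simp add: hzY_def hzX_def hzQ_def)
qed

lemma qint_0 [simp]: "qint 0 = 0"
  by (simp add: qint_def)

lemma qint_Suc_0 [simp]: "qint (Suc 0) = 1"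
  by (simp add: qint_def)

lemma qint_Suc: "qint (Suc j) = 1 + [:0, 1:] * qint j"
  unfolding qint_def sum.lessThan_Suc_shift
  by (simp add: monom_Suc sum_distrib_left monom_0)

lemma qint_Suc_top: "qint (Suc j) = qint j + [:0, 1:] ^ j"
  by (simp add: qint_def monom_altdef)

lemma qint_Suc_nonzero: "qint (Suc i) \<noteq> 0"
proof
  assume "qint (Suc i) = 0"
  then have "poly (qint (Suc i)) 0 = 0" by simp
  then show False by (simp add: qint_Suc)
qed

text \<open>Y - [j+1]_q = q (x - [j]_q): the substitution x \<mapsto> Y shifts the nodes [j]_q.\<close>

lemma hzY_minus_qint: "hzY - [:qint (Suc j):] = hzQ * (hzX - [:qint j:])"
proof -
  have "[:qint (Suc j):] = 1 + hzQ * [:qint j:]"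
    by (simp add: qint_Suc hzQ_def one_pCons)
  then show ?thesis by (simp add: hzY_def algebra_simps)
qed

definition newton :: "nat \<Rightarrow> int poly poly" where
  "newton a = (\<Prod>j=1..a. hzX - [:qint j:])"

lemma newton_0 [simp]: "newton 0 = 1"
  by (simp add: newton_def)

lemma newton_Suc: "newton (Suc a) = (hzX - [:qint (Suc a):]) * newton a"
  by (simp add: newton_def prod.nat_ivl_Suc')

lemma newton_Suc_at_1: "poly (newton (Suc b)) 1 = 0"
  by (induction b) (simp_all add: newton_Suc hzX_def)

lemma newton_pcompose: "pcompose (newton (Suc a)) hzY = hzQ ^ Suc a * hzX * newton a"
proof (induction a)
  case 0
  then show ?case
    using hzY_minus_qint[of 0] by (simp add: newton_Suc pcompose_mult pcompose_diff)
next
  case (Suc a)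
  have "pcompose (newton (Suc (Suc a))) hzY
      = (hzY - [:qint (Suc (Suc a)):]) * pcompose (newton (Suc a)) hzY"
    by (simp add: newton_Suc[of "Suc a"] pcompose_mult pcompose_diff)
  also have "\<dots> = hzQ * (hzX - [:qint (Suc a):]) * (hzQ ^ Suc a * hzX * newton a)"
    by (simp add: Suc hzY_minus_qint)
  also have "\<dots> = hzQ ^ Suc (Suc a) * hzX * newton (Suc a)"
    by (simp only: newton_Suc[of a] power_Suc mult_ac)
  finally show ?case .
qed

definition up_coeff :: "nat \<Rightarrow> int poly" where
  "up_coeff a = [:0, 1:] * qint (Suc a)"

definition level_coeff :: "nat \<Rightarrow> int poly" where
  "level_coeff a = [:1, 1:] * qint (Suc a) ^ 2"

definition down_coeff :: "nat \<Rightarrow> int poly" where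
  "down_coeff a = qint a * qint (Suc a) ^ 2"

lemma down_coeff_0 [simp]: "down_coeff 0 = 0"
  by (simp add: down_coeff_def)

text \<open>The ring identity behind the three-term relation, with s = [a]_q, t = [a+1]_q
  and p = psi_(a-1), so that psi_a = (x - s) p and psi_a(Y) = (t - s) x p.\<close>

lemma three_term_identity:
  fixes Q X Y s t p :: "'a::comm_ring_1"
  assumes "t = 1 + Q * s" "Y = 1 + Q * X"
  shows "Y * (Y * ((t - s) * X * p) - X * ((X - s) * p))
       = (Y - X) * (Q * t * ((X - t) * ((X - s) * p)) + (1 + Q) * t ^ 2 * ((X - s) * p) + s * t ^ 2 * p)"
  unfolding assms by (simp add: algebra_simps power2_eq_square)

definition newton_image :: "nat \<Rightarrow> int poly poly" where
  "newton_image a = smult (up_coeff a) (newton (Suc a)) + smult (level_coeff a) (newton a)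
      + smult (down_coeff a) (newton (a - 1))"

lemma newton_three_term: "hzY * hz_op (newton a) = (hzY - hzX) * newton_image a"
proof (cases a)
  case 0
  have "newton_image 0 = hzY"
    by (simp add: newton_image_def newton_Suc up_coeff_def level_coeff_def hzY_def hzX_def
        hzQ_def one_pCons power2_eq_square algebra_simps)
  then show ?thesis
    using 0 by (simp add: hz_op_def pcompose_1 algebra_simps)
next
  case (Suc b)
  define s where "s = [:qint (Suc b):]"
  define t where "t = [:qint (Suc (Suc b)):]"
  have t: "t = 1 + hzQ * s"
    by (simp add: t_def s_def qint_Suc[of "Suc b"] hzQ_def one_pCons)
  have "hzQ ^ Suc b = t - s"
    by (simp add: t_def s_def qint_Suc_top[of "Suc b"] hzQ_def poly_const_pow)
  then have shifted: "pcompose (newton a) hzY = (t - s) * hzX * newton b"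
    using newton_pcompose[of b] Suc by simp
  have split: "newton a = (hzX - s) * newton b"
    by (simp add: Suc newton_Suc s_def)
  have const_mult: "[:x * y:] = [:x:] * [:y:]" for x y :: "int poly"
    by (simp add: mult.commute)
  have up: "[:up_coeff a:] = hzQ * t" and level: "[:level_coeff a:] = (1 + hzQ) * t ^ 2"
    and down: "[:down_coeff a:] = s * t ^ 2"
    by (simp_all only: up_coeff_def level_coeff_def down_coeff_def const_mult Suc
        t_def s_def hzQ_def poly_const_pow) (simp add: one_pCons)
  have "newton_image a = [:up_coeff a:] * newton (Suc a) + [:level_coeff a:] * newton a + [:down_coeff a:] * newton b"
    by (simp add: newton_image_def Suc)
  also have "\<dots> = hzQ * t * ((hzX - t) * ((hzX - s) * newton b))
      + (1 + hzQ) * t ^ 2 * ((hzX - s) * newton b) + s * t ^ 2 * newton b"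
    unfolding up level down by (simp add: Suc newton_Suc s_def t_def)
  finally have expansion: "newton_image a = hzQ * t * ((hzX - t) * ((hzX - s) * newton b))
      + (1 + hzQ) * t ^ 2 * ((hzX - s) * newton b) + s * t ^ 2 * newton b" .
  show ?thesis
    unfolding hz_op_def shifted expansion unfolding split
    by (rule three_term_identity[OF t hzY_def])
qed

definition hz_step :: "(nat \<Rightarrow> int poly) \<Rightarrow> nat \<Rightarrow> int poly" where
  "hz_step g a = level_coeff a * g a + (if a = 0 then 0 else up_coeff (a - 1) * g (a - 1))
      + down_coeff (Suc a) * g (Suc a)"

text \<open>Coefficients of C_(n+1) in the Newton basis.\<close>

primrec hz_coeff :: "nat \<Rightarrow> nat \<Rightarrow> int poly" where
  "hz_coeff 0 = (\<lambda>a. if a = 0 then 1 else 0)"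
| "hz_coeff (Suc n) = hz_step (hz_coeff n)"

lemma hz_coeff_vanishes: "n < a \<Longrightarrow> hz_coeff n a = 0"
  by (induction n arbitrary: a) (auto simp: hz_step_def)

lemma sum_newton_image:
  assumes "\<And>a. K \<le> a \<Longrightarrow> g a = 0"
  shows "(\<Sum>a<K. smult (g a) (newton_image a)) = (\<Sum>a<Suc K. smult (hz_step g a) (newton a))"
proof -
  have up: "(\<Sum>a<Suc K. smult (if a = 0 then 0 else up_coeff (a - 1) * g (a - 1)) (newton a))
      = (\<Sum>a<K. smult (g a * up_coeff a) (newton (Suc a)))"
    by (subst sum.lessThan_Suc_shift) (simp add: mult.commute)
  have level: "(\<Sum>a<Suc K. smult (level_coeff a * g a) (newton a))
      = (\<Sum>a<K. smult (g a * level_coeff a) (newton a))"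
    by (simp add: assms mult.commute)
  have "(\<Sum>a<K. smult (g a * down_coeff a) (newton (a - 1)))
      = (\<Sum>a<Suc K. smult (g a * down_coeff a) (newton (a - 1)))"
    by (simp add: assms)
  also have "\<dots> = (\<Sum>a<Suc K. smult (down_coeff (Suc a) * g (Suc a)) (newton a))"
    by (subst sum.lessThan_Suc_shift) (simp add: assms mult.commute)
  finally have down: "(\<Sum>a<K. smult (g a * down_coeff a) (newton (a - 1)))
      = (\<Sum>a<Suc K. smult (down_coeff (Suc a) * g (Suc a)) (newton a))" .
  show ?thesis
    unfolding newton_image_def hz_step_def smult_add_right smult_add_left smult_smult sum.distrib
      up level down by (simp add: algebra_simps)
qed

lemma HZ_C_newton_expansion: "HZ_C (Suc n) = (\<Sum>a<Suc n. smult (hz_coeff n a) (newton a))"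
proof (induction n)
  case 0
  then show ?case by simp
next
  case (Suc n)
  define D where "D = hz_op (HZ_C (Suc n)) div (hzY - hzX)"
  have "hz_op (HZ_C (Suc n)) = (hzY - hzX) * D"
    by (simp add: D_def hz_op_dvd dvd_mult_div_cancel)
  then have "(hzY - hzX) * (hzY * D) = hzY * hz_op (HZ_C (Suc n))"
    by (simp only: mult.left_commute)
  also have "\<dots> = (\<Sum>a<Suc n. smult (hz_coeff n a) (hzY * hz_op (newton a)))"
    by (simp only: Suc hz_op_linear sum_distrib_left mult_smult_right)
  also have "\<dots> = (hzY - hzX) * (\<Sum>a<Suc n. smult (hz_coeff n a) (newton_image a))"
    by (simp only: newton_three_term sum_distrib_left mult_smult_right)
  finally have "hzY * D = (\<Sum>a<Suc n. smult (hz_coeff n a) (newton_image a))"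
    using hzY_minus_hzX_nonzero by simp
  also have "\<dots> = (\<Sum>a<Suc (Suc n). smult (hz_coeff (Suc n) a) (newton a))"
    by (simp add: sum_newton_image hz_coeff_vanishes del: sum.lessThan_Suc)
  finally show ?case
    unfolding HZ_C_Suc_Suc D_def .
qed

text \<open>Only psi_0 survives at x = 1.\<close>

lemma HZ_C_at_1: "poly (HZ_C (Suc n)) 1 = hz_coeff n 0"
  unfolding HZ_C_newton_expansion poly_sum
  by (subst sum.lessThan_Suc_shift) (simp add: newton_Suc_at_1)

section \<open>Removing the factor (1+q)^n\<close>

text \<open>[k]_q [k+1]_q / (1+q), i.e. the Gaussian binomial coefficient [k+1 choose 2]_q.\<close>

definition qtri :: "nat \<Rightarrow> int poly" where
  "qtri k = qint k * qint (Suc k) div [:1, 1:]"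

lemma qtri_exact: "[:1, 1:] * qtri k = qint k * qint (Suc k)"
proof -
  have "[:1, 1:] dvd qint k * qint (Suc k)"
  proof (induction k)
    case 0
    then show ?case by simp
  next
    case (Suc k)
    then obtain p where p: "qint k * qint (Suc k) = [:1, 1:] * p" by blast
    have "qint (Suc (Suc k)) = qint k + [:0, 1:] ^ k * [:1, 1:]"
      by (simp add: qint_Suc_top algebra_simps)
    then have "qint (Suc k) * qint (Suc (Suc k)) = [:1, 1:] * (p + qint (Suc k) * [:0, 1:] ^ k)"
      by (simp add: p algebra_simps)
    then show ?case by (rule dvdI)
  qed
  then show ?thesis
    unfolding qtri_def by (rule dvd_mult_div_cancel)
qed

lemma qfact_0 [simp]: "qfact 0 = 1"
  by (simp add: qfact_def)

lemma qfact_Suc: "qfact (Suc a) = qfact a * qint (Suc a)"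
  by (simp add: qfact_def prod.nat_ivl_Suc' mult.commute)

definition norm_step :: "(nat \<Rightarrow> int poly) \<Rightarrow> nat \<Rightarrow> int poly" where
  "norm_step u a = qint (Suc a) ^ 2 * u a + (if a = 0 then 0 else qtri a * u (a - 1))
      + [:0, 1:] * qtri (Suc a) * u (Suc a)"

primrec hz_norm :: "nat \<Rightarrow> nat \<Rightarrow> int poly" where
  "hz_norm 0 = (\<lambda>a. if a = 0 then 1 else 0)"
| "hz_norm (Suc n) = norm_step (hz_norm n)"

text \<open>Conjugating the recurrence by the diagonal matrix
  diag(q^a (1+q)^n / [a+1]_q!) turns hz_step into norm_step, up to one factor 1+q.\<close>

lemma hz_step_gauge:
  assumes gauge: "\<And>a. qfact (Suc a) * g a = [:1, 1:] ^ n * [:0, 1:] ^ a * u a"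
  shows "qfact (Suc a) * hz_step g a = [:1, 1:] ^ Suc n * [:0, 1:] ^ a * norm_step u a"
proof -
  define P X :: "int poly" where "P = [:1, 1:]" and "X = [:0, 1:]"
  note gauge = gauge[folded P_def X_def]
  note qtri = qtri_exact[folded P_def]
  have level: "qfact (Suc a) * (level_coeff a * g a) = P ^ Suc n * X ^ a * (qint (Suc a) ^ 2 * u a)"
  proof -
    have "qfact (Suc a) * (level_coeff a * g a) = P * qint (Suc a) ^ 2 * (qfact (Suc a) * g a)"
      by (simp add: level_coeff_def P_def algebra_simps)
    also have "\<dots> = P ^ Suc n * X ^ a * (qint (Suc a) ^ 2 * u a)"
      by (simp only: gauge) (simp add: algebra_simps)
    finally show ?thesis .
  qed
  have up: "qfact (Suc a) * (if a = 0 then 0 else up_coeff (a - 1) * g (a - 1))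
      = P ^ Suc n * X ^ a * (if a = 0 then 0 else qtri a * u (a - 1))"
  proof (cases a)
    case (Suc b)
    have "qfact (Suc a) * (up_coeff b * g b)
        = X * (qint (Suc b) * qint (Suc (Suc b))) * (qfact (Suc b) * g b)"
      by (simp add: Suc qfact_Suc[of "Suc b"] up_coeff_def X_def algebra_simps)
    also have "\<dots> = P ^ Suc n * X ^ a * (qtri a * u b)"
      by (simp only: gauge qtri[symmetric]) (simp add: Suc algebra_simps)
    finally show ?thesis using Suc by simp
  qed simp
  have down: "qfact (Suc a) * (down_coeff (Suc a) * g (Suc a))
      = P ^ Suc n * X ^ a * (X * qtri (Suc a) * u (Suc a))"
  proof -
    have "qfact (Suc a) * (down_coeff (Suc a) * g (Suc a))
        = qint (Suc a) * qint (Suc (Suc a)) * (qfact (Suc (Suc a)) * g (Suc a))"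
      by (simp add: qfact_Suc[of "Suc a"] down_coeff_def algebra_simps power2_eq_square)
    also have "\<dots> = P ^ Suc n * X ^ a * (X * qtri (Suc a) * u (Suc a))"
      by (simp only: gauge qtri[symmetric]) (simp add: algebra_simps)
    finally show ?thesis .
  qed
  show ?thesis
    unfolding hz_step_def norm_step_def distrib_left level up down P_def X_def by simp
qed

lemma hz_coeff_gauge: "qfact (Suc a) * hz_coeff n a = [:1, 1:] ^ n * [:0, 1:] ^ a * hz_norm n a"
proof (induction n arbitrary: a)
  case 0
  then show ?case by (simp add: qfact_Suc)
next
  case (Suc n)
  then show ?case by (simp add: hz_step_gauge)
qed

lemma HZ_cbar_Suc: "HZ_cbar (Suc n) = hz_norm n 0"
proof -
  have "poly (HZ_C (Suc n)) 1 = [:1, 1:] ^ n * hz_norm n 0"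
    using hz_coeff_gauge[of 0 n] by (simp add: HZ_C_at_1 qfact_Suc)
  then show ?thesis by (simp add: HZ_cbar_def)
qed

section \<open>Evaluation at real points and reversal q \<mapsto> 1/q\<close>

definition ev :: "int poly \<Rightarrow> real \<Rightarrow> real" where
  "ev p x = poly (map_poly of_int p) x"

lemma ev_add [simp]: "ev (p + r) x = ev p x + ev r x"
proof -
  have "map_poly (of_int :: int \<Rightarrow> real) (p + r) = map_poly of_int p + map_poly of_int r"
    by (rule poly_eqI) (simp add: coeff_map_poly)
  then show ?thesis by (simp add: ev_def)
qed

lemma ev_mult [simp]: "ev (p * r) x = ev p x * ev r x"
proof -
  have "map_poly (of_int :: int \<Rightarrow> real) (p * r) = map_poly of_int p * map_poly of_int r"
    by (rule poly_eqI) (simp add: coeff_map_poly coeff_mult)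
  then show ?thesis by (simp add: ev_def)
qed

lemma ev_0 [simp]: "ev 0 x = 0"
  by (simp add: ev_def)

lemma ev_1 [simp]: "ev 1 x = 1"
  by (simp add: ev_def)

lemma ev_power [simp]: "ev (p ^ k) x = ev p x ^ k"
  by (induction k) simp_all

lemma ev_times_X [simp]: "ev (pCons 0 p) x = x * ev p x"
  by (simp add: ev_def map_poly_pCons)

lemma ev_1_plus_X [simp]: "ev [:1, 1:] x = 1 + x"
  by (simp add: ev_def map_poly_pCons)

lemma ev_monom_1 [simp]: "ev (monom 1 j) x = x ^ j"
  by (simp add: ev_def map_poly_monom poly_monom)

lemma ev_qint: "ev (qint k) x = (\<Sum>j<k. x ^ j)"
proof -
  have "ev (\<Sum>j\<in>A. monom 1 j) x = (\<Sum>j\<in>A. x ^ j)" if "finite A" for A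
    using that by (induction A rule: finite_induct) simp_all
  then show ?thesis by (simp add: qint_def)
qed

lemma qint_reverse:
  assumes "q \<noteq> 0"
  shows "ev (qint (Suc a)) (inverse q) = ev (qint (Suc a)) q / q ^ a"
proof -
  have "q ^ a * (\<Sum>j<Suc a. inverse q ^ j) = (\<Sum>j<Suc a. q ^ (a - j))"
    unfolding sum_distrib_left
    by (rule sum.cong) (auto simp: assms power_diff_conv_inverse)
  also have "\<dots> = (\<Sum>j<Suc a. q ^ j)"
    using sum.nat_diff_reindex[where g = "\<lambda>j. q ^ j" and n = "Suc a"] by simp
  finally show ?thesis
    unfolding ev_qint using assms by (simp add: eq_divide_eq mult.commute del: sum.lessThan_Suc)
qed

lemma qtri_reverse:
  assumes "q \<noteq> 0"
  shows "ev (qtri (Suc a)) (inverse q) = ev (qtri (Suc a)) q / q ^ (2 * a)"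
proof (cases "q = -1")
  case True
  then show ?thesis by (simp add: power_mult)
next
  case False
  have qtri_ev: "(1 + x) * ev (qtri k) x = ev (qint k) x * ev (qint (Suc k)) x" for k x
    using arg_cong[OF qtri_exact, of "\<lambda>p. ev p x"] by (simp only: ev_mult ev_1_plus_X)
  have "(1 + q) * ev (qtri (Suc a)) (inverse q) = q * ((1 + inverse q) * ev (qtri (Suc a)) (inverse q))"
    using assms by (simp add: field_simps)
  also have "\<dots> = q * ((ev (qint (Suc a)) q / q ^ a) * (ev (qint (Suc (Suc a))) q / q ^ Suc a))"
    unfolding qtri_ev qint_reverse[OF assms] ..
  also have "\<dots> = q * (ev (qint (Suc a)) q * ev (qint (Suc (Suc a))) q) / (q ^ a * q ^ Suc a)"
    by simp
  also have "\<dots> = (1 + q) * (ev (qtri (Suc a)) q / q ^ (2 * a))"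
    unfolding qtri_ev[symmetric] using assms by (simp add: field_simps power_add mult_2 mult_2_right)
  finally have "(1 + q) * ev (qtri (Suc a)) (inverse q) = (1 + q) * (ev (qtri (Suc a)) q / q ^ (2 * a))" .
  moreover have "1 + q \<noteq> 0"
    using False by (simp add: add_eq_0_iff)
  ultimately show ?thesis
    by (metis mult_left_cancel)
qed

section \<open>The summand of h_n as a weighted lattice path\<close>

text \<open>The few Gaussian binomial coefficients [m choose k]_q with m - 2 \<le> k that occur.\<close>

lemma qfact_nonzero: "qfact m \<noteq> 0"
proof -
  have "qint i \<noteq> 0" if "1 \<le> i" for i
    using qint_Suc_nonzero[of "i - 1"] that by simp
  then show ?thesis by (simp add: qfact_def)
qed

lemma qbinom_above: "m < k \<Longrightarrow> qbinom m k = 0"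
  by (simp add: qbinom_def)

lemma qbinom_zero: "qbinom m 0 = 1"
  by (simp add: qbinom_def qfact_nonzero)

lemma qbinom_diag: "qbinom m m = 1"
  by (simp add: qbinom_def qfact_nonzero)

lemma qbinom_Suc_self: "qbinom (Suc a) a = qint (Suc a)"
  by (simp add: qbinom_def qfact_Suc qfact_nonzero)

lemma qbinom_Suc_Suc_self: "qbinom (Suc (Suc a)) a = qtri (Suc a)"
proof -
  have "qfact 2 = [:1, 1:]"
    by (simp add: numeral_2_eq_2 qfact_Suc qint_Suc one_pCons)
  then have "qfact (Suc (Suc a)) = (qfact a * qfact 2) * qtri (Suc a)"
    by (simp only: qfact_Suc mult.assoc qtri_exact)
  moreover have "Suc (Suc a) - a = 2" by simp
  ultimately show ?thesis
    unfolding qbinom_def using qfact_nonzero by simp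
qed

text \<open>Neighbouring values f_(k), f_(k+1) of a summation index contribute the factor
  [1+f_k choose f_(k+1)]_q [1+f_(k+1) choose f_k]_q, which vanishes unless they
  differ by at most one.\<close>

definition adjacent :: "nat \<Rightarrow> nat \<Rightarrow> bool" where
  "adjacent a b \<longleftrightarrow> b \<le> Suc a \<and> a \<le> Suc b"

definition pair_weight :: "nat \<Rightarrow> nat \<Rightarrow> int poly" where
  "pair_weight a b = qbinom (Suc a) b * qbinom (Suc b) a"

lemma pair_weight_same: "pair_weight a a = qint (Suc a) ^ 2"
  by (simp add: pair_weight_def qbinom_Suc_self power2_eq_square)

lemma pair_weight_up: "pair_weight a (Suc a) = qtri (Suc a)"
  by (simp add: pair_weight_def qbinom_Suc_Suc_self qbinom_diag)

lemma pair_weight_down: "pair_weight (Suc a) a = qtri (Suc a)"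
  by (simp add: pair_weight_def qbinom_Suc_Suc_self qbinom_diag)

lemma pair_weight_nonzero_iff: "pair_weight a b \<noteq> 0 \<longleftrightarrow> adjacent a b"
proof
  assume "pair_weight a b \<noteq> 0"
  then show "adjacent a b"
    unfolding pair_weight_def adjacent_def using qbinom_above by (metis mult_eq_0_iff not_le)
next
  have qtri_nonzero: "qtri (Suc a) \<noteq> 0" for a
    using qtri_exact[of "Suc a"] qint_Suc_nonzero[of a] qint_Suc_nonzero[of "Suc a"] by auto
  assume "adjacent a b"
  then consider "b = a" | "b = Suc a" | "a = Suc b"
    unfolding adjacent_def by linarith
  then show "pair_weight a b \<noteq> 0"
    by cases (simp_all add: pair_weight_same pair_weight_up pair_weight_down
        qint_Suc_nonzero qtri_nonzero)
qed

text \<open>Lattice paths 0 = f_0, f_1, \<dots>, f_m = a with steps in {-1,0,1}, encoded as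
  functions vanishing outside {1..m}, with their weight and q-exponent.\<close>

definition paths :: "nat \<Rightarrow> nat \<Rightarrow> (nat \<Rightarrow> nat) set" where
  "paths m a = {f. (\<forall>k. k \<notin> {1..m} \<longrightarrow> f k = 0) \<and> f m = a \<and> (\<forall>k<m. adjacent (f k) (f (Suc k)))}"

definition path_weight :: "nat \<Rightarrow> (nat \<Rightarrow> nat) \<Rightarrow> int poly" where
  "path_weight m f = (\<Prod>k<m. pair_weight (f k) (f (Suc k)))"

definition path_exp :: "nat \<Rightarrow> (nat \<Rightarrow> nat) \<Rightarrow> int" where
  "path_exp m f = (\<Sum>k<m. (int k - int (f k)) * (1 - int (f k) + int (f (Suc k))))"

definition path_sum :: "nat \<Rightarrow> nat \<Rightarrow> real \<Rightarrow> real" where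
  "path_sum m a x = (\<Sum>f\<in>paths m a. x powi path_exp m f * ev (path_weight m f) x)"

lemma paths_0: "paths 0 a = (if a = 0 then {\<lambda>_. 0} else {})"
  by (auto simp: paths_def)

lemma paths_finite: "finite (paths m a)"
proof (rule finite_subset)
  have bound: "f k \<le> k" if "f \<in> paths m a" "k \<le> m" for f k
    using that(2)
  proof (induction k)
    case (Suc k)
    then have "adjacent (f k) (f (Suc k))"
      using that(1) by (simp add: paths_def)
    with Suc show ?case by (simp add: adjacent_def)
  qed (use that(1) in \<open>simp add: paths_def\<close>)
  show "paths m a \<subseteq> {f. \<forall>k. (k \<in> {1..m} \<longrightarrow> f k \<in> {0..m}) \<and> (k \<notin> {1..m} \<longrightarrow> f k = 0)}"
  proof
    fix f assume f: "f \<in> paths m a"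
    then show "f \<in> {f. \<forall>k. (k \<in> {1..m} \<longrightarrow> f k \<in> {0..m}) \<and> (k \<notin> {1..m} \<longrightarrow> f k = 0)}"
      using bound[OF f] by (auto simp: paths_def) (meson le_trans)
  qed
  show "finite {f. \<forall>k. (k \<in> {1..m} \<longrightarrow> f k \<in> {0..m}) \<and> (k \<notin> {1..m} \<longrightarrow> (f k :: nat) = 0)}"
    by (rule finite_set_of_finite_funs) auto
qed

definition extend :: "nat \<Rightarrow> nat \<Rightarrow> nat \<times> (nat \<Rightarrow> nat) \<Rightarrow> nat \<Rightarrow> nat" where
  "extend m b = (\<lambda>(a, f). f(Suc m := b))"

lemma paths_Suc: "paths (Suc m) b = extend m b ` (SIGMA a:{a. adjacent a b}. paths m a)"
proof
  show "paths (Suc m) b \<subseteq> extend m b ` (SIGMA a:{a. adjacent a b}. paths m a)"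
  proof
    fix g assume g: "g \<in> paths (Suc m) b"
    then have "(g m, g(Suc m := 0)) \<in> (SIGMA a:{a. adjacent a b}. paths m a)"
      and "g = extend m b (g m, g(Suc m := 0))"
      by (auto simp: paths_def extend_def)
    then show "g \<in> extend m b ` (SIGMA a:{a. adjacent a b}. paths m a)" by blast
  qed
  show "extend m b ` (SIGMA a:{a. adjacent a b}. paths m a) \<subseteq> paths (Suc m) b"
    by (auto simp: paths_def extend_def less_Suc_eq)
qed

lemma extend_inj: "inj_on (extend m b) (SIGMA a:{a. adjacent a b}. paths m a)"
proof (rule inj_onI, clarify)
  fix a f a' f'
  assume f: "f \<in> paths m a" and f': "f' \<in> paths m a'"
    and eq: "extend m b (a, f) = extend m b (a', f')"
  have "f = f'"
  proof
    fix k
    show "f k = f' k"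
      using f f' fun_cong[OF eq, of k] by (cases "k = Suc m") (auto simp: paths_def extend_def)
  qed
  moreover have "a = f m" "a' = f' m"
    using f f' by (auto simp: paths_def)
  ultimately show "a = a' \<and> f = f'" by simp
qed

definition transfer :: "real \<Rightarrow> nat \<Rightarrow> nat \<Rightarrow> nat \<Rightarrow> real" where
  "transfer x m a b = x powi ((int m - int a) * (1 - int a + int b)) * ev (pair_weight a b) x"

lemma path_sum_Suc:
  assumes "x \<noteq> 0"
  shows "path_sum (Suc m) b x = (\<Sum>a\<in>{a. adjacent a b}. path_sum m a x * transfer x m a b)"
proof -
  have finite_nbrs: "finite {a. adjacent a b}"
    by (rule finite_subset[of _ "{..Suc b}"]) (auto simp: adjacent_def)
  have extend_summand: "x powi path_exp (Suc m) (extend m b (a, f)) * ev (path_weight (Suc m) (extend m b (a, f))) x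
      = (x powi path_exp m f * ev (path_weight m f) x) * transfer x m a b"
    if "f \<in> paths m a" for a f
    using that assms
    by (simp add: paths_def extend_def path_exp_def path_weight_def transfer_def power_int_add)
  have "path_sum (Suc m) b x = (\<Sum>(a, f)\<in>(SIGMA a:{a. adjacent a b}. paths m a).
      x powi path_exp (Suc m) (extend m b (a, f)) * ev (path_weight (Suc m) (extend m b (a, f))) x)"
    unfolding path_sum_def paths_Suc by (subst sum.reindex[OF extend_inj]) (simp add: case_prod_beta)
  also have "\<dots> = (\<Sum>a\<in>{a. adjacent a b}. \<Sum>f\<in>paths m a.
      (x powi path_exp m f * ev (path_weight m f) x) * transfer x m a b)"
    by (subst sum.Sigma[symmetric]) (auto simp: finite_nbrs paths_finite extend_summand)
  also have "\<dots> = (\<Sum>a\<in>{a. adjacent a b}. path_sum m a x * transfer x m a b)"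
    by (simp add: path_sum_def sum_distrib_right)
  finally show ?thesis .
qed

section \<open>The reversed path sums satisfy the normalised recurrence\<close>

text \<open>The power of q normalising the reversed path sums: q^(m choose 2) for the
  full reversal, corrected by the level a reached at time m.\<close>

definition norm_exp :: "nat \<Rightarrow> nat \<Rightarrow> int" where
  "norm_exp m a = int (m choose 2) + int m * int a - int (Suc a choose 2)"

lemma choose_2_Suc: "Suc k choose 2 = (k choose 2) + k"
  by (simp add: numeral_2_eq_2)

lemma transfer_inverse:
  assumes "q \<noteq> 0" and palindromic: "ev (pair_weight a b) (inverse q) = c / q ^ k"
  shows "q powi e * transfer (inverse q) m a b
       = q powi (e - (int m - int a) * (1 - int a + int b) - int k) * c"
proof -
  let ?d = "(int m - int a) * (1 - int a + int b)"
  have "q powi e * transfer (inverse q) m a b = q powi e * (inverse (q powi ?d) * (c / q ^ k))"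
    by (simp add: transfer_def palindromic power_int_inverse)
  also have "\<dots> = q powi e / q powi ?d / q ^ k * c"
    by (simp add: divide_inverse ac_simps)
  also have "\<dots> = q powi (e - ?d - int k) * c"
    using assms(1) by (simp add: power_int_diff)
  finally show ?thesis .
qed

lemma transfer_same:
  assumes "q \<noteq> 0"
  shows "q powi (norm_exp (Suc m) a - norm_exp m a) * transfer (inverse q) m a a = ev (qint (Suc a) ^ 2) q"
proof -
  have "ev (pair_weight a a) (inverse q) = ev (qint (Suc a) ^ 2) q / q ^ (2 * a)"
    by (simp add: pair_weight_same qint_reverse[OF assms] power_divide power_mult mult.commute)
  moreover have "norm_exp (Suc m) a - norm_exp m a - (int m - int a) * (1 - int a + int a) - int (2 * a) = 0"
    by (simp add: norm_exp_def choose_2_Suc algebra_simps)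
  ultimately show ?thesis
    using transfer_inverse[OF assms] by simp
qed

lemma transfer_up:
  assumes "q \<noteq> 0"
  shows "q powi (norm_exp (Suc m) (Suc a) - norm_exp m a) * transfer (inverse q) m a (Suc a) = ev (qtri (Suc a)) q"
proof -
  have "norm_exp (Suc m) (Suc a) - norm_exp m a - (int m - int a) * (1 - int a + int (Suc a)) - int (2 * a) = 0"
    by (simp add: norm_exp_def choose_2_Suc algebra_simps)
  then show ?thesis
    using transfer_inverse[OF assms] by (simp add: pair_weight_up qtri_reverse[OF assms])
qed

lemma transfer_down:
  assumes "q \<noteq> 0"
  shows "q powi (norm_exp (Suc m) a - norm_exp m (Suc a)) * transfer (inverse q) m (Suc a) a = q * ev (qtri (Suc a)) q"
proof -
  have "norm_exp (Suc m) a - norm_exp m (Suc a) - (int m - int (Suc a)) * (1 - int (Suc a) + int a) - int (2 * a) = 1"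
    by (simp add: norm_exp_def choose_2_Suc algebra_simps)
  then show ?thesis
    using transfer_inverse[OF assms] by (simp add: pair_weight_down qtri_reverse[OF assms])
qed

lemma path_sum_reversed:
  assumes "q \<noteq> 0"
  shows "q powi norm_exp m a * path_sum m a (inverse q) = ev (hz_norm m a) q"
proof (induction m arbitrary: a)
  case 0
  show ?case by (simp add: path_sum_def paths_0 norm_exp_def choose_2_Suc path_exp_def path_weight_def)
next
  case (Suc m)
  have "q powi norm_exp (Suc m) a * path_sum (Suc m) a (inverse q)
      = (\<Sum>b\<in>{b. adjacent b a}. q powi norm_exp (Suc m) a * (path_sum m b (inverse q) * transfer (inverse q) m b a))"
    using assms by (simp add: path_sum_Suc sum_distrib_left)
  also have "\<dots> = (\<Sum>b\<in>{b. adjacent b a}. (q powi norm_exp m b * path_sum m b (inverse q))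
          * (q powi (norm_exp (Suc m) a - norm_exp m b) * transfer (inverse q) m b a))"
    using assms by (intro sum.cong refl) (simp add: power_int_diff)
  also have "\<dots> = (\<Sum>b\<in>{b. adjacent b a}.
      ev (hz_norm m b) q * (q powi (norm_exp (Suc m) a - norm_exp m b) * transfer (inverse q) m b a))"
    by (simp only: Suc)
  also have "\<dots> = ev (hz_norm (Suc m) a) q"
  proof (cases a)
    case 0
    have "{b. adjacent b 0} = {0, 1}"
      by (auto simp: adjacent_def)
    then show ?thesis
      using 0 transfer_same[OF assms, of m 0] transfer_down[OF assms, of m 0]
      by (simp add: norm_step_def ac_simps)
  next
    case (Suc c)
    have "{b. adjacent b (Suc c)} = {c, Suc c, Suc (Suc c)}"
      by (auto simp: adjacent_def)
    then show ?thesis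
      using Suc transfer_same[OF assms, of m "Suc c"] transfer_down[OF assms, of m "Suc c"]
        transfer_up[OF assms, of m c]
      by (simp add: norm_step_def ac_simps)
  qed
  finally show ?case .
qed

section \<open>The Poincare polynomial as a path sum\<close>

lemma support_shift:
  fixes n :: nat and f :: "nat \<Rightarrow> nat"
  shows "(\<forall>k. k \<notin> {1..n - 1} \<longrightarrow> f k = 0) \<longleftrightarrow> (\<forall>k. k \<notin> {1..n} \<longrightarrow> f k = 0) \<and> f n = 0"
proof
  assume vanish: "\<forall>k. k \<notin> {1..n - 1} \<longrightarrow> f k = 0"
  have "n \<notin> {1..n - 1}"
    by (cases n) auto
  then have "f n = 0"
    using vanish by blast
  moreover have "f k = 0" if "k \<notin> {1..n}" for k
  proof -
    have "k \<notin> {1..n - 1}" using that by auto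
    with vanish show ?thesis by blast
  qed
  ultimately show "(\<forall>k. k \<notin> {1..n} \<longrightarrow> f k = 0) \<and> f n = 0" by blast
next
  assume vanish: "(\<forall>k. k \<notin> {1..n} \<longrightarrow> f k = 0) \<and> f n = 0"
  show "\<forall>k. k \<notin> {1..n - 1} \<longrightarrow> f k = 0"
  proof (intro allI impI)
    fix k assume "k \<notin> {1..n - 1}"
    then have "k \<notin> {1..n} \<or> k = n" by auto
    then show "f k = 0" using vanish by auto
  qed
qed

lemma hz_binprod_path_weight:
  assumes "\<forall>k. k \<notin> {1..n - 1} \<longrightarrow> f k = 0"
  shows "hz_binprod n f = path_weight n f"
proof (cases n)
  case 0
  then show ?thesis by (simp add: hz_binprod_def path_weight_def)
next
  case (Suc m)
  have f0: "f 0 = 0" and fn: "f (Suc m) = 0"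
    using assms Suc by auto
  have "hz_binprod n f = (\<Prod>k<m. qbinom (Suc (f k)) (f (Suc k)))
      * (\<Prod>k<m. qbinom (Suc (f (Suc (Suc k)))) (f (Suc k)))"
    unfolding hz_binprod_def Suc by (simp add: prod.atLeast1_atMost_eq prod.distrib)
  also have "\<dots> = (\<Prod>k<Suc m. qbinom (Suc (f k)) (f (Suc k)))
      * (\<Prod>k<Suc m. qbinom (Suc (f (Suc k))) (f k))"
  proof -
    have "(\<Prod>k<Suc m. qbinom (Suc (f k)) (f (Suc k))) = (\<Prod>k<m. qbinom (Suc (f k)) (f (Suc k)))"
      by (simp add: fn qbinom_zero)
    moreover have "(\<Prod>k<Suc m. qbinom (Suc (f (Suc k))) (f k))
        = (\<Prod>k<m. qbinom (Suc (f (Suc (Suc k)))) (f (Suc k)))"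
      by (subst prod.lessThan_Suc_shift) (simp add: f0 qbinom_zero)
    ultimately show ?thesis by simp
  qed
  also have "\<dots> = path_weight n f"
    unfolding path_weight_def pair_weight_def Suc by (simp add: prod.distrib)
  finally show ?thesis .
qed

lemma hz_exp_path_exp:
  assumes "\<forall>k. k \<notin> {1..n - 1} \<longrightarrow> f k = 0"
  shows "hz_exp n f = path_exp n f"
proof (cases n)
  case 0
  then show ?thesis by (simp add: hz_exp_def path_exp_def)
next
  case (Suc m)
  have "f 0 = 0" using assms by auto
  then show ?thesis
    unfolding hz_exp_def path_exp_def Suc
    by (subst sum.lessThan_Suc_shift) (simp add: sum.atLeast1_atMost_eq)
qed

lemma path_weight_nonzero_iff: "path_weight m f \<noteq> 0 \<longleftrightarrow> (\<forall>k<m. adjacent (f k) (f (Suc k)))"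
  by (auto simp: path_weight_def pair_weight_nonzero_iff)

lemma hz_index_paths: "hz_index n = paths n 0"
proof -
  have "f \<in> hz_index n \<longleftrightarrow> f \<in> paths n 0" for f
  proof (cases "\<forall>k. k \<notin> {1..n - 1} \<longrightarrow> f k = 0")
    case True
    then have support: "(\<forall>k. k \<notin> {1..n} \<longrightarrow> f k = 0) \<and> f n = 0"
      using support_shift by blast
    have "f \<in> hz_index n \<longleftrightarrow> path_weight n f \<noteq> 0"
      using True by (simp add: hz_index_def hz_binprod_path_weight)
    also have "\<dots> \<longleftrightarrow> f \<in> paths n 0"
      using support by (simp add: paths_def path_weight_nonzero_iff)
    finally show ?thesis .
  next
    case False
    then show ?thesis
      using support_shift[of n f] unfolding hz_index_def paths_def by blast
  qed
  then show ?thesis by blast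
qed

lemma h_poincare_path_sum: "h_poincare n x = path_sum n 0 x"
  unfolding h_poincare_def path_sum_def hz_index_paths
proof (intro sum.cong refl)
  fix f assume "f \<in> paths n 0"
  then have "\<forall>k. k \<notin> {1..n - 1} \<longrightarrow> f k = 0"
    unfolding paths_def support_shift by blast
  then show "x powi hz_exp n f * poly (map_poly of_int (hz_binprod n f)) x
      = x powi path_exp n f * ev (path_weight n f) x"
    by (simp add: hz_binprod_path_weight hz_exp_path_exp ev_def)
qed

theorem corollary3p5:
  fixes n :: nat and q :: real
  assumes "q \<noteq> 0"
  shows "h_tilde n q = poly (map_poly of_int (HZ_cbar (Suc n))) q"
proof -
  have "q ^ (n * (n - 1) div 2) = q powi norm_exp n 0"
    by (simp add: norm_exp_def choose_two)
  then have "h_tilde n q = q powi norm_exp n 0 * path_sum n 0 (inverse q)"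
    by (simp add: h_tilde_def h_poincare_path_sum)
  also have "\<dots> = ev (hz_norm n 0) q"
    by (rule path_sum_reversed[OF assms])
  finally show ?thesis
    by (simp add: HZ_cbar_Suc ev_def)
qed

end
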